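(* Let $n$ be a positive integer and define $$ F_n(x,b,q)=\sum_{k=0}^n \frac{(q^{-n};q)_k\,(b;q)_k\,(x;q)_k}{(q;q)_k\,(bq^{1-n};q^2)_k}\, q^k . $$ Then, as rational functions in the indeterminates $x,b,q$, $F_n(x,b,q)=(-1)^n F_n(-x,b,q)$.
   Context: The $q$-shifted factorial is $(y;q)_0=1$ and $(y;q)_m=(1-y)(1-yq)\cdots(1-yq^{m-1})$ for $m\geqslant1$. *)

theory Defs
  imports Complex_Main
begin

definition qpoch :: "'a::comm_ring_1 \<Rightarrow> 'a \<Rightarrow> nat \<Rightarrow> 'a" where
  "qpoch y q m = (\<Prod>j<m. 1 - y * q ^ j)"

definition Fn :: "nat \<Rightarrow> complex \<Rightarrow> complex \<Rightarrow> complex \<Rightarrow> complex" where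
  "Fn n x b q = (\<Sum>k=0..n.
     qpoch (q powi (- int n)) q k * qpoch b q k * qpoch x q k
     / (qpoch q q k * qpoch (b * q powi (1 - int n)) (q\<^sup>2) k) * q ^ k)"

end

theory Submission
  imports Defs "HOL-Computational_Algebra.Polynomial"
begin

text \<open>
  Write \<open>F\<^sub>n(x)\<close> for the series with parameters \<open>a = q\<^sup>-\<^sup>n\<close>, \<open>b\<close>, \<open>c = abq\<close>.
  Splitting off one factor of \<open>(x;q)\<^sub>k\<close> gives the \<open>q\<close>-difference equation
  \<open>F\<^sub>n(x) - F\<^sub>n(qx) = -\<kappa> x F'\<^sub>n\<^sub>-\<^sub>1(qx)\<close> for a constant \<open>\<kappa>\<close>, where \<open>F'\<close> is the same
  series with \<open>b\<close> replaced by \<open>bq\<close>. By induction on \<open>n\<close>, \<open>F'\<^sub>n\<^sub>-\<^sub>1\<close> has parity \<open>(-1)\<^sup>n\<^sup>-\<^sup>1\<close>, so the parity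
  defect \<open>h(x) = F\<^sub>n(x) - (-1)\<^sup>n F\<^sub>n(-x)\<close> satisfies \<open>h(qx) = h(x)\<close>. As \<open>h\<close> is a polynomial
  of degree at most \<open>n\<close> and \<open>q\<^sup>j \<noteq> 1\<close> for \<open>1 \<le> j \<le> n\<close>, it is constant, equal to \<open>h(0)\<close>.
  For even \<open>n\<close> trivially \<open>h(0) = 0\<close>; for odd \<open>n\<close> one needs the summation \<open>F\<^sub>n(0) = 0\<close>,
  which follows from a contiguous relation, proved by telescoping, that lowers \<open>n\<close> by two
  down to the evident case \<open>n = 1\<close>.
\<close>

lemma qpoch_0 [simp]: "qpoch y q 0 = 1"
  by (simp add: qpoch_def)

lemma qpoch_Suc: "qpoch y q (Suc m) = qpoch y q m * (1 - y * q ^ m)"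
  by (simp add: qpoch_def)

lemma qpoch_Suc_left: "qpoch y q (Suc m) = (1 - y) * qpoch (y * q) q m"
  unfolding qpoch_def prod.lessThan_Suc_shift by (simp add: mult.assoc)

lemma qpoch_eq_0_iff:
  fixes y q :: "'a::idom"
  shows "qpoch y q m = 0 \<longleftrightarrow> (\<exists>j<m. y * q ^ j = 1)"
  by (auto simp: qpoch_def)

lemma qpoch_neq_0_le:
  fixes y q :: "'a::idom"
  shows "qpoch y q m \<noteq> 0 \<Longrightarrow> k \<le> m \<Longrightarrow> qpoch y q k \<noteq> 0"
  by (auto simp: qpoch_eq_0_iff)

lemma power_neq_1_if_qpoch_neq_0:
  fixes q :: "'a::idom"
  shows "qpoch q q m \<noteq> 0 \<Longrightarrow> 0 < j \<Longrightarrow> j \<le> m \<Longrightarrow> q ^ j \<noteq> 1"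
  by (cases j) (auto simp: qpoch_eq_0_iff)

lemma qpoch_Suc_diff_dilated:
  "qpoch x q (Suc m) - qpoch (q * x) q (Suc m) = - x * (1 - q ^ Suc m) * qpoch (q * x) q m"
  by (simp add: qpoch_Suc_left[of x] qpoch_Suc[of "q * x"] algebra_simps)

lemma poly_qpoch: "poly (\<Prod>j<m. [:1, - (q ^ j):]) x = qpoch x q m"
  by (simp add: poly_prod qpoch_def mult.commute)

lemma degree_qpoch_poly: "degree (\<Prod>j<m. [:1, - (q ^ j):]) \<le> m"
proof (induction m)
  case (Suc m)
  have "degree (\<Prod>j<Suc m. [:1, - (q ^ j):]) \<le> degree (\<Prod>j<m. [:1, - (q ^ j):]) + degree [:1, - (q ^ m):]"
    unfolding prod.lessThan_Suc by (rule degree_mult_le)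
  also have "\<dots> \<le> m + 1"
    using Suc.IH by (intro add_mono) auto
  finally show ?case
    by simp
qed simp

lemma poly_dilation_invariant_const:
  fixes p :: "'a::field_char_0 poly"
  assumes invariant: "\<And>x. poly p (q * x) = poly p x"
    and roots: "\<And>j. 0 < j \<Longrightarrow> j \<le> degree p \<Longrightarrow> q ^ j \<noteq> 1"
  shows "poly p x = poly p 0"
proof -
  have "pcompose p [:0, q:] = p"
    using invariant by (simp add: poly_eq_poly_eq_iff[symmetric] fun_eq_iff poly_pcompose mult.commute)
  then have "q ^ degree p * lead_coeff p = lead_coeff p"
    by (metis coeff_pcompose_linear)
  then have "degree p = 0"
    using roots[of "degree p"] by (cases "p = 0") auto
  then show ?thesis
    by (metis degree_eq_zeroE poly_pCons poly_0 mult_zero_right add.right_neutral)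
qed

text \<open>With \<open>a = q\<^sup>-\<^sup>n\<close> and \<open>c = a b q = b q\<^sup>1\<^sup>-\<^sup>n\<close>, \<^term>\<open>qhyp a b c q n x\<close> is the series \<open>F\<^sub>n(x, b, q)\<close>.\<close>

definition qhyp_coeff :: "'a::field \<Rightarrow> 'a \<Rightarrow> 'a \<Rightarrow> 'a \<Rightarrow> nat \<Rightarrow> 'a" where
  "qhyp_coeff a b c q k = qpoch a q k * qpoch b q k / (qpoch q q k * qpoch c (q\<^sup>2) k) * q ^ k"

definition qhyp :: "'a::field \<Rightarrow> 'a \<Rightarrow> 'a \<Rightarrow> 'a \<Rightarrow> nat \<Rightarrow> 'a \<Rightarrow> 'a" where
  "qhyp a b c q n x = (\<Sum>k=0..n. qhyp_coeff a b c q k * qpoch x q k)"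

text \<open>No side conditions are needed: whenever a denominator vanishes, both sides are \<open>0\<close>.\<close>

lemma qhyp_coeff_Suc:
  "qhyp_coeff a b c q (Suc k)
     = (1 - a) * (1 - b) * q / ((1 - c) * (1 - q ^ Suc k)) * qhyp_coeff (a * q) (b * q) (c * q\<^sup>2) q k"
  by (simp add: qhyp_coeff_def qpoch_Suc_left[of a] qpoch_Suc_left[of b] qpoch_Suc_left[of c]
      qpoch_Suc[of q] divide_inverse ac_simps)

lemma qhyp_0 [simp]: "qhyp a b c q 0 x = 1"
  by (simp add: qhyp_def qhyp_coeff_def)

lemma qhyp_at_0: "qhyp a b c q n 0 = (\<Sum>k=0..n. qhyp_coeff a b c q k)"
  by (simp add: qhyp_def qpoch_def)

lemma qhyp_polynomial:
  obtains p where "degree p \<le> n" "qhyp a b c q n = poly p"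
proof
  let ?p = "\<Sum>k=0..n. smult (qhyp_coeff a b c q k) (\<Prod>j<k. [:1, - (q ^ j):])"
  show "qhyp a b c q n = poly ?p"
    by (simp add: fun_eq_iff qhyp_def poly_sum poly_qpoch)
  show "degree ?p \<le> n"
    by (intro degree_sum_le order.trans[OF degree_smult_le] order.trans[OF degree_qpoch_poly]) auto
qed

lemma qhyp_q_difference:
  assumes "qpoch q q (Suc n) \<noteq> 0"
  shows "qhyp a b c q (Suc n) x - qhyp a b c q (Suc n) (q * x)
           = - x * ((1 - a) * (1 - b) * q / (1 - c)) * qhyp (a * q) (b * q) (c * q\<^sup>2) q n (q * x)"
proof -
  have term_diff: "qhyp_coeff a b c q (Suc k) * (qpoch x q (Suc k) - qpoch (q * x) q (Suc k))
      = - x * ((1 - a) * (1 - b) * q / (1 - c)) * (qhyp_coeff (a * q) (b * q) (c * q\<^sup>2) q k * qpoch (q * x) q k)"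
    if "k \<le> n" for k
  proof -
    have "1 - q ^ Suc k \<noteq> 0"
      using power_neq_1_if_qpoch_neq_0[OF assms, of "Suc k"] that by auto
    then show ?thesis
      by (simp add: qhyp_coeff_Suc qpoch_Suc_diff_dilated)
  qed
  have "qhyp a b c q (Suc n) x - qhyp a b c q (Suc n) (q * x)
      = (\<Sum>k=0..Suc n. qhyp_coeff a b c q k * (qpoch x q k - qpoch (q * x) q k))"
    by (simp add: qhyp_def sum_subtractf right_diff_distrib)
  also have "\<dots> = (\<Sum>k=0..n. qhyp_coeff a b c q (Suc k) * (qpoch x q (Suc k) - qpoch (q * x) q (Suc k)))"
    by (subst sum.atLeast0_atMost_Suc_shift) simp
  also have "\<dots> = (\<Sum>k=0..n. - x * ((1 - a) * (1 - b) * q / (1 - c))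
                      * (qhyp_coeff (a * q) (b * q) (c * q\<^sup>2) q k * qpoch (q * x) q k))"
    by (rule sum.cong) (simp_all add: term_diff)
  also have "\<dots> = - x * ((1 - a) * (1 - b) * q / (1 - c)) * qhyp (a * q) (b * q) (c * q\<^sup>2) q n (q * x)"
    by (simp add: qhyp_def sum_distrib_left)
  finally show ?thesis .
qed

text \<open>\<open>G\<close> is a Gosper certificate: a rational multiple of the summand that vanishes at \<open>j = 0\<close>.\<close>

lemma qhyp_coeff_telescoping:
  fixes a b q :: "'a::field"
  assumes "q \<noteq> 0" "a \<noteq> 1" "qpoch q q (Suc i) \<noteq> 0" "qpoch (a * b * q) (q\<^sup>2) (Suc i) \<noteq> 0"
  defines "G \<equiv> \<lambda>j. qhyp_coeff a b (a * b * q) q j * (1 - q ^ j) / ((1 - a) * q ^ j)"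
  shows "qhyp_coeff a b (a * b * q) q i
           - b * (1 - a * q) / (1 - a * b * q) * qhyp_coeff (a * q\<^sup>2) b (a * b * q * q\<^sup>2) q i
         = G (Suc i) - G i"
proof -
  define X Y Q C u where "X = qpoch a q i" and "Y = qpoch b q i" and "Q = qpoch q q i"
    and "C = qpoch (a * b * q) (q\<^sup>2) i" and "u = q ^ i"
  define ea ec eq where "ea = 1 - a" and "ec = 1 - a * b * q * u\<^sup>2" and "eq = 1 - q * u"
  define D where "D = ea * Q * C * ec"
  have u2: "(q\<^sup>2) ^ i = u\<^sup>2"
    by (simp add: u_def power_mult_distrib[symmetric] power_mult[symmetric] mult.commute)
  have nonzero: "u \<noteq> 0" "Q \<noteq> 0" "C \<noteq> 0" "ea \<noteq> 0" "ec \<noteq> 0" "eq \<noteq> 0"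
    using assms(1-4) by (simp_all add: u_def Q_def C_def ea_def ec_def eq_def u2 qpoch_Suc)
  have "ea * ((1 - a * q) * qpoch (a * q\<^sup>2) q i) = qpoch a q (Suc (Suc i))"
    by (simp add: ea_def qpoch_Suc_left power2_eq_square mult.assoc)
  also have "\<dots> = X * (1 - a * u) * (1 - a * q * u)"
    by (simp add: qpoch_Suc X_def u_def ac_simps)
  finally have shift_a: "(1 - a * q) * qpoch (a * q\<^sup>2) q i = X * (1 - a * u) * (1 - a * q * u) / ea"
    using nonzero by (simp add: field_simps)
  have shift_c: "(1 - a * b * q) * qpoch (a * b * q * q\<^sup>2) (q\<^sup>2) i = C * ec"
    using qpoch_Suc_left[of "a * b * q" "q\<^sup>2" i] qpoch_Suc[of "a * b * q" "q\<^sup>2" i]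
    by (simp add: C_def ec_def u2)
  have "b * (1 - a * q) / (1 - a * b * q) * qhyp_coeff (a * q\<^sup>2) b (a * b * q * q\<^sup>2) q i
      = b * ((1 - a * q) * qpoch (a * q\<^sup>2) q i) * Y * u
          / (Q * ((1 - a * b * q) * qpoch (a * b * q * q\<^sup>2) (q\<^sup>2) i))"
    by (simp add: qhyp_coeff_def Y_def Q_def u_def ac_simps)
  also have "\<dots> = X * Y * (b * u * (1 - a * u) * (1 - a * q * u)) / D"
    unfolding shift_a shift_c D_def using nonzero by (simp add: field_simps)
  finally have shifted: "b * (1 - a * q) / (1 - a * b * q) * qhyp_coeff (a * q\<^sup>2) b (a * b * q * q\<^sup>2) q i
      = X * Y * (b * u * (1 - a * u) * (1 - a * q * u)) / D" .
  have coeff_i: "qhyp_coeff a b (a * b * q) q i = X * Y / (Q * C) * u"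
    by (simp add: qhyp_coeff_def X_def Y_def Q_def C_def u_def)
  have coeff_Suc: "qhyp_coeff a b (a * b * q) q (Suc i) = X * (1 - a * u) * (Y * (1 - b * u)) / (Q * eq * (C * ec)) * (q * u)"
    by (simp add: qhyp_coeff_def qpoch_Suc X_def Y_def Q_def C_def u_def eq_def ec_def u2)
  have G_Suc: "G (Suc i) = X * Y * ((1 - a * u) * (1 - b * u)) / D"
    unfolding G_def power_Suc u_def[symmetric] coeff_Suc eq_def[symmetric] ea_def[symmetric] D_def
    using assms(1) nonzero by (simp add: field_simps)
  have G_i: "G i = X * Y * ((1 - u) * ec) / D"
    unfolding G_def u_def[symmetric] coeff_i ea_def[symmetric] D_def
    using nonzero by (simp add: field_simps)
  have coeff_i_common: "qhyp_coeff a b (a * b * q) q i = X * Y * (u * ea * ec) / D"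
    unfolding coeff_i D_def using nonzero by (simp add: field_simps)
  have "u * ea * ec - b * u * (1 - a * u) * (1 - a * q * u) = (1 - a * u) * (1 - b * u) - (1 - u) * ec"
    unfolding ea_def ec_def by algebra
  then show ?thesis
    unfolding coeff_i_common shifted G_Suc G_i by (metis diff_divide_distrib right_diff_distrib)
qed

lemma qhyp_at_0_reduction:
  fixes a b q :: "'a::field"
  assumes aq: "a * q ^ Suc (Suc n) = 1"
    and nonzero: "qpoch q q (Suc (Suc n)) \<noteq> 0" "qpoch (a * b * q) (q\<^sup>2) (Suc (Suc n)) \<noteq> 0"
  shows "qhyp a b (a * b * q) q (Suc (Suc n)) 0
           = b * (1 - a * q) / (1 - a * b * q) * qhyp (a * q\<^sup>2) b (a * b * q * q\<^sup>2) q n 0"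
proof -
  define N where "N = Suc (Suc n)"
  define t t' where "t = qhyp_coeff a b (a * b * q) q" and "t' = qhyp_coeff (a * q\<^sup>2) b (a * b * q * q\<^sup>2) q"
  define \<alpha> where "\<alpha> = b * (1 - a * q) / (1 - a * b * q)"
  define G where "G = (\<lambda>j. t j * (1 - q ^ j) / ((1 - a) * q ^ j))"
  have "q \<noteq> 0"
    using aq by auto
  have "q ^ N \<noteq> 1"
    using power_neq_1_if_qpoch_neq_0[OF nonzero(1), of N] by (simp add: N_def)
  then have "a \<noteq> 1"
    using aq by (auto simp: N_def)
  have "t i - \<alpha> * t' i = G (Suc i) - G i" if "i < N" for i
    unfolding t_def t'_def \<alpha>_def G_def
    using qhyp_coeff_telescoping[OF \<open>q \<noteq> 0\<close> \<open>a \<noteq> 1\<close>] qpoch_neq_0_le[OF nonzero(1)] qpoch_neq_0_le[OF nonzero(2)]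
      that by (simp add: N_def)
  then have telescoped: "(\<Sum>i<N. t i - \<alpha> * t' i) = G N"
    using sum_lessThan_telescope[of G N] by (simp add: G_def)
  have "(\<Sum>i\<le>N. t i) - \<alpha> * (\<Sum>i<N. t' i) = (\<Sum>i<N. t i - \<alpha> * t' i) + t N"
    by (simp add: lessThan_Suc_atMost[symmetric] sum_subtractf sum_distrib_left)
  also have "\<dots> = 0"
    unfolding telescoped using aq \<open>q ^ N \<noteq> 1\<close> by (simp add: G_def N_def field_simps)
  finally have "(\<Sum>i\<le>N. t i) = \<alpha> * (\<Sum>i<N. t' i)"
    by simp
  have "qpoch (a * q\<^sup>2) q (Suc n) = 0"
    unfolding qpoch_eq_0_iff using aq by (intro exI[of _ n]) (simp add: power2_eq_square ac_simps)
  then have "t' (Suc n) = 0"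
    by (simp add: t'_def qhyp_coeff_def)
  with \<open>(\<Sum>i\<le>N. t i) = \<alpha> * (\<Sum>i<N. t' i)\<close> have "(\<Sum>i\<le>N. t i) = \<alpha> * (\<Sum>i\<le>n. t' i)"
    by (simp add: N_def lessThan_Suc_atMost)
  then show ?thesis
    unfolding qhyp_at_0 atLeast0AtMost N_def[symmetric] t_def[symmetric] t'_def[symmetric] \<alpha>_def[symmetric] .
qed

lemma qhyp_at_0_odd_eq_0:
  fixes a b q :: "'a::field"
  assumes "a * q ^ (2 * m + 1) = 1" "qpoch q q (2 * m + 1) \<noteq> 0" "qpoch (a * b * q) (q\<^sup>2) (2 * m + 1) \<noteq> 0"
  shows "qhyp a b (a * b * q) q (2 * m + 1) 0 = 0"
  using assms
proof (induction m arbitrary: a)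
  case 0
  then have abq: "a * b * q = b"
    by (simp add: algebra_simps)
  have "(1 - a) * (1 - b) * q = - ((1 - q) * (1 - b))"
    using 0(1) by (simp add: algebra_simps)
  moreover have "(1 - q) * (1 - b) \<noteq> 0"
    using 0(2,3) unfolding abq by (simp add: qpoch_def)
  ultimately show ?case
    unfolding abq by (simp add: qhyp_at_0 qhyp_coeff_def qpoch_def)
next
  case (Suc m)
  have "a * q\<^sup>2 * q ^ (2 * m + 1) = 1"
    using Suc.prems(1) by (simp add: power2_eq_square ac_simps)
  moreover have "qpoch (a * q\<^sup>2 * b * q) (q\<^sup>2) (2 * m + 1) \<noteq> 0"
    using qpoch_neq_0_le[OF Suc.prems(3), of "Suc (2 * m + 1)"] by (simp add: qpoch_Suc_left ac_simps)
  ultimately have "qhyp (a * q\<^sup>2) b (a * q\<^sup>2 * b * q) q (2 * m + 1) 0 = 0"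
    using Suc.IH qpoch_neq_0_le[OF Suc.prems(2)] by simp
  moreover have "a * q\<^sup>2 * b * q = a * b * q * q\<^sup>2"
    by (simp add: ac_simps)
  ultimately show ?case
    using qhyp_at_0_reduction[of a q "2 * m + 1" b] Suc.prems by simp
qed

lemma reflection_defect_dilation_invariant:
  fixes f g :: "'a::comm_ring_1 \<Rightarrow> 'a"
  assumes difference: "\<And>y. f y - f (q * y) = - y * k * g (q * y)"
    and parity: "\<And>y. g (- y) = (-1) ^ n * g y"
  shows "f (q * y) - (-1) ^ Suc n * f (- (q * y)) = f y - (-1) ^ Suc n * f (- y)"
proof -
  have "(f y - (-1) ^ Suc n * f (- y)) - (f (q * y) - (-1) ^ Suc n * f (- (q * y)))
      = (f y - f (q * y)) + (-1) ^ n * (f (- y) - f (q * - y))"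
    by (simp add: algebra_simps)
  also have "\<dots> = - y * k * g (q * y) + (-1) ^ n * (y * k * g (- (q * y)))"
    using difference[of y] difference[of "- y"] by simp
  also have "\<dots> = 0"
    using parity[of "q * y"] by (simp add: algebra_simps flip: power_add mult_2)
  finally show ?thesis
    by simp
qed

lemma qhyp_reflection:
  fixes a b q x :: "'a::field_char_0"
  assumes "a * q ^ n = 1" "qpoch q q n \<noteq> 0" "qpoch (a * b * q) (q\<^sup>2) n \<noteq> 0"
  shows "qhyp a b (a * b * q) q n x = (-1) ^ n * qhyp a b (a * b * q) q n (- x)"
  using assms
proof (induction n arbitrary: a b x)
  case (Suc n)
  define f where "f = qhyp a b (a * b * q) q (Suc n)"
  define g where "g = qhyp (a * q) (b * q) (a * q * (b * q) * q) q n"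
  define h where "h y = f y - (-1) ^ Suc n * f (- y)" for y
  have c_shift: "a * q * (b * q) * q = a * b * q * q\<^sup>2"
    by (simp add: power2_eq_square ac_simps)
  have "a * q * q ^ n = 1" "qpoch q q n \<noteq> 0"
    using Suc.prems(1,2) by (simp_all add: qpoch_Suc ac_simps)
  moreover have "qpoch (a * q * (b * q) * q) (q\<^sup>2) n \<noteq> 0"
    using Suc.prems(3) unfolding c_shift by (simp add: qpoch_Suc_left)
  ultimately have parity: "g (- y) = (-1) ^ n * g y" for y
    unfolding g_def using Suc.IH[of "a * q" "b * q" "- y"] by simp
  have difference: "f y - f (q * y) = - y * ((1 - a) * (1 - b) * q / (1 - a * b * q)) * g (q * y)" for y
    unfolding f_def g_def c_shift using qhyp_q_difference[OF Suc.prems(2)] by simp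
  have invariant: "h (q * y) = h y" for y
    unfolding h_def by (rule reflection_defect_dilation_invariant[OF difference parity])
  have "h 0 = 0"
  proof (cases "even (Suc n)")
    case False
    then obtain m where "Suc n = 2 * m + 1"
      by (metis oddE)
    then show ?thesis
      using qhyp_at_0_odd_eq_0[of a q m b] Suc.prems by (simp add: h_def f_def)
  qed (simp add: h_def)
  obtain p where "degree p \<le> Suc n" "f = poly p"
    unfolding f_def by (rule qhyp_polynomial)
  define H where "H = p - smult ((-1) ^ Suc n) (p \<circ>\<^sub>p [:0, -1:])"
  have "poly H = h"
    by (simp add: fun_eq_iff H_def h_def \<open>f = poly p\<close> poly_pcompose)
  have "degree H \<le> Suc n"
    unfolding H_def using \<open>degree p \<le> Suc n\<close>
    by (intro degree_diff_le order.trans[OF degree_smult_le]) (auto simp: degree_pcompose)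
  have "poly H x = poly H 0"
  proof (rule poly_dilation_invariant_const)
    show "poly H (q * y) = poly H y" for y
      using invariant \<open>poly H = h\<close> by simp
    show "q ^ j \<noteq> 1" if "0 < j" "j \<le> degree H" for j
      using power_neq_1_if_qpoch_neq_0[OF Suc.prems(2)] that \<open>degree H \<le> Suc n\<close> by simp
  qed
  then have "h x = 0"
    using \<open>h 0 = 0\<close> \<open>poly H = h\<close> by simp
  then show ?case
    unfolding h_def f_def by (simp add: eq_neg_iff_add_eq_0)
qed simp

theorem lemma3p1:
  fixes n :: nat and x b q :: complex
  assumes "n \<ge> 1"
    and "q \<noteq> 0"
    and "\<forall>k\<le>n. qpoch q q k \<noteq> 0"
    and "\<forall>k\<le>n. qpoch (b * q powi (1 - int n)) (q\<^sup>2) k \<noteq> 0"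
  shows "Fn n x b q = (-1) ^ n * Fn n (- x) b q"
proof -
  define a where "a = inverse (q ^ n)"
  have powers: "q powi (- int n) = a" "b * q powi (1 - int n) = a * b * q"
    using assms(2) by (simp_all add: a_def power_int_minus power_int_diff field_simps)
  have "Fn n y b q = qhyp a b (a * b * q) q n y" for y
    unfolding Fn_def qhyp_def qhyp_coeff_def powers by (simp add: ac_simps)
  moreover have "a * q ^ n = 1"
    using assms(2) by (simp add: a_def)
  ultimately show ?thesis
    using qhyp_reflection[of a q n b x] assms(3,4) unfolding powers by simp
qed

end
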